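(* Let $P$ be a planar convex polygon with vertices $P_1,\dots,P_{2n}$ (indices modulo $2n$) having parallel opposite sides, i.e. the segment $P_iP_{i+1}$ is parallel to $P_{i+n}P_{i+n+1}$ for $1\le i\le n$. Fix a point $Z$ and a number $a>0$, and let $U$ be the polygon with vertices $$U_i=Z+\frac{1}{2a}\left(P_i-P_{i+n}\right),\qquad 1\le i\le 2n.$$ Then $U$ is convex, symmetric with respect to $Z$, and $U_{i+1}-U_i\parallel P_{i+1}-P_i$ and $U_i-Z\parallel P_i-P_{i+n}$ for $1\le i\le n$. Moreover, $U$ is the unique polygon $\{U_1,\dots,U_{2n}\}$ with the given first vertex $U_1=Z+\frac1{2a}(P_1-P_{1+n})$ having these properties. *)

theory Defs
  imports "HOL-Analysis.Analysis"
begin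

text \<open>Planar points are elements of real^2.  A polygon with m vertices is given by
a map V :: nat => real^2, where only V 0, ..., V (m-1) matter and indices are
read modulo m (0-based indexing: paper's P_i is our P (i-1)).\<close>

definition cross2 :: "real^2 \<Rightarrow> real^2 \<Rightarrow> real" where
  "cross2 u v = u$1 * v$2 - u$2 * v$1"

definition convex_polygon :: "nat \<Rightarrow> (nat \<Rightarrow> real^2) \<Rightarrow> bool" where
  "convex_polygon m V \<longleftrightarrow> 3 \<le> m \<and>
     (\<exists>s\<in>{-1, 1::real}. \<forall>i<m. \<forall>j<m. j \<noteq> i \<and> j \<noteq> Suc i mod m \<longrightarrow>
        s * cross2 (V (Suc i mod m) - V i) (V j - V i) > 0)"

definition parallel :: "real^2 \<Rightarrow> real^2 \<Rightarrow> bool" where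
  "parallel u v \<longleftrightarrow> collinear {0, u, v}"

definition symmetric_wrt :: "nat \<Rightarrow> (nat \<Rightarrow> real^2) \<Rightarrow> real^2 \<Rightarrow> bool" where
  "symmetric_wrt m V Z \<longleftrightarrow> (\<lambda>x. 2 *\<^sub>R Z - x) ` (V ` {..<m}) = V ` {..<m}"

end

theory Submission
  imports Defs
begin

text \<open>
  Write e i for the edges of P and i' = i + n (mod 2n) for the opposite index.  By convexity,
  parallel non-adjacent edges point in opposite directions, so e i' = - L i \<cdot> e i with L i > 0.
  Hence U (i+1) - U i = c (e i - e i') = c (1 + L i) e i: U has the edge directions of P, and the
  orientation test of U at edge i is a positive combination of those of P at edges i and i'.
  U is symmetric since U i' = 2Z - U i.

  For uniqueness, V 1, ..., V (n-1) are forced one after the other as the intersection of the line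
  through the previous vertex parallel to an edge of P with the line through Z parallel to a
  diagonal P k - P k'; convexity of P makes these two lines transversal.  Symmetry then puts all
  vertices of U among those of V, and a convex polygon is determined by its vertex set, its
  orientation and its first vertex.
\<close>

lemma cross2_simps:
  "cross2 (u + v) w = cross2 u w + cross2 v w"
  "cross2 (u - v) w = cross2 u w - cross2 v w"
  "cross2 w (u + v) = cross2 w u + cross2 w v"
  "cross2 w (u - v) = cross2 w u - cross2 w v"
  "cross2 (k *\<^sub>R u) w = k * cross2 u w"
  "cross2 w (k *\<^sub>R u) = k * cross2 w u"
  "cross2 (- u) w = - cross2 u w"
  "cross2 w (- u) = - cross2 w u"
  "cross2 u u = 0"
  "cross2 0 w = 0"
  "cross2 w 0 = 0"
  by (auto simp: cross2_def algebra_simps)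

lemma cross2_commute: "cross2 u v = - cross2 v u"
  by (simp add: cross2_def)

lemma vec2_eqI: "(x::real^2)$1 = y$1 \<Longrightarrow> x$2 = y$2 \<Longrightarrow> x = y"
  by (simp add: vec_eq_iff forall_2)

lemma cross2_eq_0_imp_scaleR:
  assumes "cross2 u v = 0" "u \<noteq> 0"
  shows "\<exists>c. v = c *\<^sub>R u"
proof (cases "u$1 = 0")
  case True
  then have "u$2 \<noteq> 0" using assms(2) by (metis vec2_eqI zero_index)
  moreover have "v$1 = 0" using assms(1) True \<open>u$2 \<noteq> 0\<close> by (simp add: cross2_def)
  ultimately show ?thesis using True
    by (intro exI[of _ "v$2 / u$2"] vec2_eqI) auto
next
  case False
  have "u$1 * v$2 = u$2 * v$1" using assms(1) by (simp add: cross2_def)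
  then show ?thesis using False
    by (intro exI[of _ "v$1 / u$1"] vec2_eqI) (auto simp: field_simps)
qed

lemma parallel_iff_cross2_eq_0: "parallel u v \<longleftrightarrow> cross2 u v = 0"
proof
  assume "parallel u v"
  then show "cross2 u v = 0"
    unfolding parallel_def collinear_lemma by (auto simp: cross2_simps)
next
  assume "cross2 u v = 0"
  then show "parallel u v"
    unfolding parallel_def collinear_lemma using cross2_eq_0_imp_scaleR by blast
qed

lemma parallel_scaleR_left: "parallel (k *\<^sub>R u) u"
  by (simp add: parallel_iff_cross2_eq_0 cross2_simps)

lemma parallel_commute: "parallel u v \<longleftrightarrow> parallel v u"
  by (simp add: parallel_def insert_commute)

lemma cross2_eq_0_both_imp_eq_0:
  assumes "cross2 w u = 0" "cross2 w v = 0" "cross2 u v \<noteq> 0"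
  shows "w = 0"
proof -
  have "w$1 * cross2 u v = u$1 * cross2 w v - v$1 * cross2 w u"
       "w$2 * cross2 u v = u$2 * cross2 w v - v$2 * cross2 w u"
    by (simp_all add: cross2_def algebra_simps)
  with assms show ?thesis by (intro vec2_eqI) auto
qed

lemma lines_meet_at_most_once:
  assumes "cross2 u v \<noteq> 0"
    and "parallel (x - p) u" "parallel (y - p) u" "parallel (x - q) v" "parallel (y - q) v"
  shows "x = y"
proof -
  have "cross2 (x - y) u = cross2 (x - p) u - cross2 (y - p) u"
    "cross2 (x - y) v = cross2 (x - q) v - cross2 (y - q) v"
    by (simp_all add: cross2_simps)
  then have "cross2 (x - y) u = 0" "cross2 (x - y) v = 0"
    using assms(2-5) by (simp_all add: parallel_iff_cross2_eq_0)
  then show ?thesis using cross2_eq_0_both_imp_eq_0[OF _ _ assms(1), of "x - y"] by simp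
qed

definition edge :: "nat \<Rightarrow> (nat \<Rightarrow> real^2) \<Rightarrow> nat \<Rightarrow> real^2" where
  "edge m V i = V (Suc i mod m) - V i"

definition oriented_polygon :: "real \<Rightarrow> nat \<Rightarrow> (nat \<Rightarrow> real^2) \<Rightarrow> bool" where
  "oriented_polygon s m V \<longleftrightarrow>
     (\<forall>i<m. \<forall>j<m. j \<noteq> i \<and> j \<noteq> Suc i mod m \<longrightarrow> s * cross2 (edge m V i) (V j - V i) > 0)"

lemma convex_polygon_iff_oriented:
  "convex_polygon m V \<longleftrightarrow> 3 \<le> m \<and> (\<exists>s\<in>{-1, 1}. oriented_polygon s m V)"
  by (simp add: convex_polygon_def oriented_polygon_def edge_def)

lemma oriented_polygonD:
  "oriented_polygon s m V \<Longrightarrow> i < m \<Longrightarrow> j < m \<Longrightarrow> j \<noteq> i \<Longrightarrow> j \<noteq> Suc i mod m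
    \<Longrightarrow> s * cross2 (edge m V i) (V j - V i) > 0"
  by (simp add: oriented_polygon_def)

lemma oriented_polygon_edge_nonzero:
  assumes "oriented_polygon s m V" "3 \<le> m" "i < m"
  shows "edge m V i \<noteq> 0"
proof
  assume "edge m V i = 0"
  have "\<exists>j\<in>{0, 1, 2}. j \<noteq> i \<and> j \<noteq> Suc i mod m" by auto
  then obtain j where "j \<in> {0, 1, 2}" "j \<noteq> i" "j \<noteq> Suc i mod m" by blast
  moreover from this have "j < m" using assms(2) by auto
  ultimately show False
    using oriented_polygonD[OF assms(1,3), of j] \<open>edge m V i = 0\<close> by (simp add: cross2_simps)
qed

lemma oriented_polygon_inj_on:
  assumes "oriented_polygon s m V" "3 \<le> m"
  shows "inj_on V {..<m}"
proof (rule inj_onI, rule ccontr)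
  fix i j assume ij: "i \<in> {..<m}" "j \<in> {..<m}" "V i = V j" "i \<noteq> j"
  show False
  proof (cases "j = Suc i mod m")
    case True
    then show False using oriented_polygon_edge_nonzero[OF assms, of i] ij by (simp add: edge_def)
  next
    case False
    then show False using oriented_polygonD[OF assms(1), of i j] ij by (simp add: cross2_simps)
  qed
qed

lemma oriented_polygon_eqI:
  assumes U: "oriented_polygon s m U" and V: "oriented_polygon s m V" and "3 \<le> m"
    and sub: "U ` {..<m} \<subseteq> V ` {..<m}" and "V 0 = U 0" and "i < m"
  shows "V i = U i"
proof -
  have injU: "inj_on U {..<m}" and injV: "inj_on V {..<m}"
    using oriented_polygon_inj_on U V \<open>3 \<le> m\<close> by blast+
  have "U ` {..<m} = V ` {..<m}"
    using card_subset_eq[OF _ sub] injU injV by (simp add: card_image)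
  then have same: "V ` {..<m} = U ` {..<m}" ..
  have "\<forall>j\<le>k. V j = U j" if "k < m" for k
    using that
  proof (induction k)
    case 0
    then show ?case using \<open>V 0 = U 0\<close> by simp
  next
    case (Suc k)
    then have IH: "\<And>j. j \<le> k \<Longrightarrow> V j = U j" and k: "Suc k mod m = Suc k" "k < m" by simp_all
    obtain l where l: "l < m" "V (Suc k) = U l" using same Suc.prems by blast
    have "l = Suc k"
    proof (rule ccontr)
      assume "l \<noteq> Suc k"
      have "k < l"
      proof (rule ccontr)
        assume "\<not> k < l"
        then have "V (Suc k) = V l" using IH[of l] l by simp
        then show False using inj_onD[OF injV] l Suc.prems \<open>\<not> k < l\<close> by force
      qed
      obtain j where j: "j < m" "V j = U (Suc k)" using same Suc.prems by force
      have "U (Suc k) \<noteq> U k" "U (Suc k) \<noteq> U l"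
        using inj_onD[OF injU] \<open>l \<noteq> Suc k\<close> \<open>k < l\<close> l Suc.prems by fastforce+
      then have "j \<noteq> k" "j \<noteq> Suc k" using j IH[of k] l by auto
      then have "s * cross2 (U l - U k) (U (Suc k) - U k) > 0"
        using oriented_polygonD[OF V k(2) j(1)] j l k IH[of k] by (simp add: edge_def)
      moreover have "s * cross2 (U (Suc k) - U k) (U l - U k) > 0"
        using oriented_polygonD[OF U k(2) l(1)] k \<open>k < l\<close> \<open>l \<noteq> Suc k\<close> by (simp add: edge_def)
      ultimately show False by (simp add: cross2_commute[of "U l - U k"])
    qed
    then show ?case using IH l by (metis le_Suc_eq)
  qed
  then show ?thesis using \<open>i < m\<close> by blast
qed

lemma convex_polygon_eqI:
  assumes U: "convex_polygon m U" and V: "convex_polygon m V"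
    and sub: "U ` {..<m} \<subseteq> V ` {..<m}" and "V 0 = U 0" "V 1 = U 1" and "i < m"
  shows "V i = U i"
proof -
  obtain s t where m: "3 \<le> m" and s: "s \<in> {-1, 1}" "oriented_polygon s m U"
    and t: "t \<in> {-1, 1}" "oriented_polygon t m V"
    using U V by (auto simp: convex_polygon_iff_oriented)
  have "U 2 \<in> V ` {..<m}" using sub m by auto
  then obtain j where j: "j < m" "V j = U 2" by (metis imageE lessThan_iff)
  have "U 2 \<noteq> U 0" "U 2 \<noteq> U 1"
    using inj_onD[OF oriented_polygon_inj_on[OF s(2) m], of 2] m by force+
  then have "j \<noteq> 0" "j \<noteq> 1" using j assms(4,5) by (metis One_nat_def)+
  then have "t * cross2 (edge m U 0) (U 2 - U 0) > 0"
    using oriented_polygonD[OF t(2), of 0 j] j m assms(4,5) by (simp add: edge_def)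
  moreover have "s * cross2 (edge m U 0) (U 2 - U 0) > 0"
    using oriented_polygonD[OF s(2), of 0 2] m by simp
  ultimately have "t = s" using s(1) t(1) by auto
  then show ?thesis using oriented_polygon_eqI[OF s(2)] t(2) m sub assms(4,6) by blast
qed

lemma oriented_polygon_parallel_edges_opposite:
  assumes P: "oriented_polygon s m P" and "i < m" "j < m"
    and "j \<noteq> i" "j \<noteq> Suc i mod m" "i \<noteq> Suc j mod m"
    and edge_j: "edge m P j = \<mu> *\<^sub>R edge m P i"
  shows "\<mu> < 0"
proof -
  have pos: "s * cross2 (edge m P i) (P j - P i) > 0"
    using oriented_polygonD[OF P assms(2-5)] .
  have "s * cross2 (edge m P j) (P i - P j) > 0"
    using oriented_polygonD[OF P assms(3,2) assms(4)[symmetric] assms(6)] .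
  also have "s * cross2 (edge m P j) (P i - P j) = - \<mu> * (s * cross2 (edge m P i) (P j - P i))"
    unfolding edge_j by (simp add: cross2_simps cross2_commute[of _ "P i - P j"] algebra_simps)
  finally have "- \<mu> * (s * cross2 (edge m P i) (P j - P i)) > 0" .
  from zero_less_mult_pos2[OF this pos] show ?thesis by simp
qed

definition antipode :: "nat \<Rightarrow> nat \<Rightarrow> nat" where
  "antipode n i = (i + n) mod (2 * n)"

lemma antipode_less: "0 < n \<Longrightarrow> antipode n i < 2 * n"
  by (simp add: antipode_def)

lemma antipode_eq_add: "i < n \<Longrightarrow> antipode n i = i + n"
  by (simp add: antipode_def)

lemma antipode_eq_diff: "n \<le> i \<Longrightarrow> i < 2 * n \<Longrightarrow> antipode n i = i - n"
  by (simp add: antipode_def mod_if)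

lemma antipode_antipode: "i < 2 * n \<Longrightarrow> antipode n (antipode n i) = i"
  by (cases "i < n") (simp_all add: antipode_eq_add antipode_eq_diff)

lemma antipode_Suc_mod: "antipode n (Suc i mod (2 * n)) = Suc (antipode n i) mod (2 * n)"
  by (simp add: antipode_def mod_simps)

lemma antipode_not_adjacent:
  assumes "2 \<le> n" "i < 2 * n"
  shows "antipode n i \<noteq> i \<and> antipode n i \<noteq> Suc i mod (2 * n) \<and> i \<noteq> Suc (antipode n i) mod (2 * n)"
  using assms by (cases "i < n") (auto simp: antipode_eq_add antipode_eq_diff mod_Suc)

lemma parallel_antipodal_edges:
  assumes "\<forall>i<n. parallel (P (Suc i) - P i) (P ((i + n + 1) mod (2*n)) - P (i + n))"
    and "i < 2 * n"
  shows "parallel (edge (2 * n) P i) (edge (2 * n) P (antipode n i))"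
proof (cases "i < n")
  case True
  then show ?thesis using assms(1) by (simp add: edge_def antipode_eq_add)
next
  case False
  define k where "k = i - n"
  have "k < n" "i = k + n" using False assms(2) by (simp_all add: k_def)
  then show ?thesis using assms(1) parallel_commute by (simp add: edge_def antipode_eq_diff)
qed

lemma antipodal_edges_antiparallel:
  assumes "oriented_polygon s (2 * n) P" "2 \<le> n"
    and "parallel (edge (2 * n) P i) (edge (2 * n) P (antipode n i))" "i < 2 * n"
  shows "\<exists>L>0. edge (2 * n) P (antipode n i) = - L *\<^sub>R edge (2 * n) P i"
proof -
  have "edge (2 * n) P i \<noteq> 0"
    using oriented_polygon_edge_nonzero[OF assms(1) _ assms(4)] assms(2) by simp
  then obtain \<mu> where \<mu>: "edge (2 * n) P (antipode n i) = \<mu> *\<^sub>R edge (2 * n) P i"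
    using cross2_eq_0_imp_scaleR assms(3)[unfolded parallel_iff_cross2_eq_0] by blast
  have "\<mu> < 0"
    using oriented_polygon_parallel_edges_opposite[OF assms(1,4) antipode_less _ _ _ \<mu>]
      antipode_not_adjacent[OF assms(2,4)] assms(2) by simp
  with \<mu> show ?thesis by (intro exI[of _ "- \<mu>"]) simp
qed

definition difference_polygon :: "nat \<Rightarrow> real^2 \<Rightarrow> real \<Rightarrow> (nat \<Rightarrow> real^2) \<Rightarrow> nat \<Rightarrow> real^2" where
  "difference_polygon n Z c P i = Z + c *\<^sub>R (P i - P (antipode n i))"

lemma edge_difference_polygon:
  "edge (2 * n) (difference_polygon n Z c P) i = c *\<^sub>R (edge (2 * n) P i - edge (2 * n) P (antipode n i))"
  unfolding edge_def difference_polygon_def antipode_Suc_mod by (simp add: algebra_simps)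

lemma difference_polygon_antipode:
  "i < 2 * n \<Longrightarrow> difference_polygon n Z c P (antipode n i) = 2 *\<^sub>R Z - difference_polygon n Z c P i"
  by (simp add: difference_polygon_def antipode_antipode algebra_simps scaleR_2)

lemma symmetric_wrt_difference_polygon:
  assumes "0 < n"
  shows "symmetric_wrt (2 * n) (difference_polygon n Z c P) Z"
proof -
  let ?U = "difference_polygon n Z c P" and ?\<rho> = "\<lambda>x. 2 *\<^sub>R Z - x"
  have closed: "?\<rho> x \<in> ?U ` {..<2 * n}" if "x \<in> ?U ` {..<2 * n}" for x
  proof -
    obtain k where "k < 2 * n" "x = ?U k" using \<open>x \<in> ?U ` {..<2 * n}\<close> by blast
    then have "?\<rho> x = ?U (antipode n k)" by (simp add: difference_polygon_antipode)
    then show ?thesis using antipode_less[OF assms] by blast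
  qed
  have "x = ?\<rho> (?\<rho> x)" for x :: "real^2" by simp
  then show ?thesis unfolding symmetric_wrt_def using closed by blast
qed

lemma oriented_difference_polygon:
  assumes P: "oriented_polygon s (2 * n) P" and "c > 0"
    and antiparallel: "\<And>i. i < 2 * n \<Longrightarrow> \<exists>L>0. edge (2 * n) P (antipode n i) = - L *\<^sub>R edge (2 * n) P i"
  shows "oriented_polygon s (2 * n) (difference_polygon n Z c P)"
  unfolding oriented_polygon_def
proof (intro allI impI)
  fix i j assume ij: "i < 2 * n" "j < 2 * n" "j \<noteq> i \<and> j \<noteq> Suc i mod (2 * n)"
  let ?U = "difference_polygon n Z c P" and ?N = "antipode n" and ?e = "edge (2 * n) P"
  obtain L where "L > 0" and eN: "?e (?N i) = - L *\<^sub>R ?e i" using antiparallel ij(1) by blast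
  have "n > 0" using ij by simp
  have "?N j \<noteq> ?N i"
    using ij antipode_antipode by metis
  moreover have "?N j \<noteq> Suc (?N i) mod (2 * n)"
  proof
    assume "?N j = Suc (?N i) mod (2 * n)"
    then have "?N (?N j) = ?N (?N (Suc i mod (2 * n)))" by (simp only: antipode_Suc_mod)
    then show False using ij \<open>n > 0\<close> by (simp add: antipode_antipode)
  qed
  ultimately have "s * cross2 (?e (?N i)) (P (?N j) - P (?N i)) > 0"
    using oriented_polygonD[OF P antipode_less antipode_less] \<open>n > 0\<close> by blast
  also have "cross2 (?e (?N i)) (P (?N j) - P (?N i)) = L * cross2 (?e i) (P (?N i) - P (?N j))"
    unfolding eN by (simp add: cross2_simps algebra_simps)
  finally have "L * (s * cross2 (?e i) (P (?N i) - P (?N j))) > 0" by (simp add: algebra_simps)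
  then have opposite: "s * cross2 (?e i) (P (?N i) - P (?N j)) > 0"
    using \<open>L > 0\<close> zero_less_mult_pos by blast
  have own: "s * cross2 (?e i) (P j - P i) > 0" using oriented_polygonD[OF P ij(1,2)] ij(3) by blast
  have "s * cross2 (edge (2 * n) ?U i) (?U j - ?U i)
      = c * (1 + L) * c * (s * cross2 (?e i) (P j - P i) + s * cross2 (?e i) (P (?N i) - P (?N j)))"
    unfolding edge_difference_polygon eN by (simp add: difference_polygon_def cross2_simps algebra_simps)
  also have "\<dots> > 0" using own opposite \<open>c > 0\<close> \<open>L > 0\<close> by simp
  finally show "s * cross2 (edge (2 * n) ?U i) (?U j - ?U i) > 0" .
qed

lemma difference_polygon_edges_parallel:
  assumes "\<And>i. i < 2 * n \<Longrightarrow> \<exists>L>0. edge (2 * n) P (antipode n i) = - L *\<^sub>R edge (2 * n) P i"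
  shows "\<forall>i<n. parallel (difference_polygon n Z c P (Suc i) - difference_polygon n Z c P i)
                        (P (Suc i) - P i)"
proof (intro allI impI)
  fix i assume "i < n"
  then obtain L where "edge (2 * n) P (antipode n i) = - L *\<^sub>R edge (2 * n) P i"
    using assms[of i] by auto
  then have "edge (2 * n) (difference_polygon n Z c P) i = (c * (1 + L)) *\<^sub>R edge (2 * n) P i"
    unfolding edge_difference_polygon by (simp add: algebra_simps)
  with \<open>i < n\<close> show "parallel (difference_polygon n Z c P (Suc i) - difference_polygon n Z c P i)
                        (P (Suc i) - P i)"
    by (simp add: edge_def parallel_scaleR_left)
qed

lemma first_half_eq_if_same_directions:
  assumes P: "oriented_polygon s (2 * n) P" and "V 0 = W 0"
    and "\<forall>i<n. parallel (V (Suc i) - V i) (P (Suc i) - P i)"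
    and "\<forall>i<n. parallel (W (Suc i) - W i) (P (Suc i) - P i)"
    and "\<forall>i<n. parallel (V i - Z) (P i - P (i + n))"
    and "\<forall>i<n. parallel (W i - Z) (P i - P (i + n))"
    and "k < n"
  shows "V k = W k"
  using \<open>k < n\<close>
proof (induction k)
  case 0
  then show ?case using \<open>V 0 = W 0\<close> by simp
next
  case (Suc k)
  let ?u = "P (Suc k) - P k" and ?v = "P (Suc k) - P (Suc k + n)"
  have "edge (2 * n) P k = ?u" using Suc.prems by (simp add: edge_def)
  then have "s * cross2 ?u (P (Suc k + n) - P k) > 0"
    using oriented_polygonD[OF P, of k "Suc k + n"] Suc.prems by simp
  moreover have "cross2 ?u ?v = - cross2 ?u (P (Suc k + n) - P k)"
    by (simp add: cross2_def algebra_simps)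
  ultimately have "cross2 ?u ?v \<noteq> 0" by auto
  moreover have "k < n" "V k = W k" using Suc by simp_all
  then have "parallel (V (Suc k) - W k) ?u" "parallel (W (Suc k) - W k) ?u"
    using assms(3,4) by force+
  moreover have "parallel (V (Suc k) - Z) ?v" "parallel (W (Suc k) - Z) ?v"
    using Suc.prems assms(5,6) by force+
  ultimately show ?case by (rule lines_meet_at_most_once)
qed

lemma image_subset_if_symmetric_wrt:
  assumes "symmetric_wrt (2 * n) V Z" and "\<And>k. k < n \<Longrightarrow> V k = U k"
    and "\<And>k. k < n \<Longrightarrow> U (k + n) = 2 *\<^sub>R Z - U k"
  shows "U ` {..<2 * n} \<subseteq> V ` {..<2 * n}"
proof
  fix x assume "x \<in> U ` {..<2 * n}"
  then obtain i where "i < 2 * n" "x = U i" by blast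
  show "x \<in> V ` {..<2 * n}"
  proof (cases "i < n")
    case True
    then have "x = V i" "i < 2 * n" using \<open>x = U i\<close> assms(2) by simp_all
    then show ?thesis by blast
  next
    case False
    define k where "k = i - n"
    have "k < n" "i = k + n" using False \<open>i < 2 * n\<close> by (simp_all add: k_def)
    then have "x = 2 *\<^sub>R Z - V k" using \<open>x = U i\<close> assms(2,3) by simp
    moreover have "V k \<in> V ` {..<2 * n}" using \<open>k < n\<close> by simp
    ultimately have "x \<in> (\<lambda>y. 2 *\<^sub>R Z - y) ` V ` {..<2 * n}" by blast
    then show ?thesis using assms(1) unfolding symmetric_wrt_def by simp
  qed
qed

lemma convex_polygon_unique_by_directions:
  assumes P: "oriented_polygon s (2 * n) P" and "2 \<le> n"
    and convU: "convex_polygon (2 * n) U"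
    and reflected: "\<And>k. k < n \<Longrightarrow> U (k + n) = 2 *\<^sub>R Z - U k"
    and edgesU: "\<forall>i<n. parallel (U (Suc i) - U i) (P (Suc i) - P i)"
    and radiiU: "\<forall>i<n. parallel (U i - Z) (P i - P (i + n))"
    and convV: "convex_polygon (2 * n) V" and symV: "symmetric_wrt (2 * n) V Z" and V0: "V 0 = U 0"
    and edgesV: "\<forall>i<n. parallel (V (Suc i) - V i) (P (Suc i) - P i)"
    and radiiV: "\<forall>i<n. parallel (V i - Z) (P i - P (i + n))"
    and "i < 2 * n"
  shows "V i = U i"
proof -
  have first_half: "V k = U k" if "k < n" for k
    using first_half_eq_if_same_directions[OF P V0 edgesV edgesU radiiV radiiU that] .
  have "U ` {..<2 * n} \<subseteq> V ` {..<2 * n}"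
    using image_subset_if_symmetric_wrt[OF symV first_half reflected] .
  moreover have "V 1 = U 1" using first_half \<open>2 \<le> n\<close> by simp
  ultimately show ?thesis using convex_polygon_eqI[OF convU convV] V0 \<open>i < 2 * n\<close> by blast
qed

theorem lemma2p1:
  fixes P :: "nat \<Rightarrow> real^2" and n :: nat and Z :: "real^2" and a :: real
  assumes convP: "convex_polygon (2*n) P"
    and parP: "\<forall>i<n. parallel (P (Suc i) - P i) (P ((i + n + 1) mod (2*n)) - P (i + n))"
    and a_pos: "a > 0"
  defines "U \<equiv> (\<lambda>i. Z + (1 / (2*a)) *\<^sub>R (P i - P ((i + n) mod (2*n))))"
  shows "convex_polygon (2*n) U
       \<and> symmetric_wrt (2*n) U Z
       \<and> (\<forall>i<n. parallel (U (Suc i) - U i) (P (Suc i) - P i))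
       \<and> (\<forall>i<n. parallel (U i - Z) (P i - P (i + n)))
       \<and> (\<forall>V :: nat \<Rightarrow> real^2.
            V 0 = U 0 \<and> convex_polygon (2*n) V \<and> symmetric_wrt (2*n) V Z
            \<and> (\<forall>i<n. parallel (V (Suc i) - V i) (P (Suc i) - P i))
            \<and> (\<forall>i<n. parallel (V i - Z) (P i - P (i + n)))
            \<longrightarrow> (\<forall>i<2*n. V i = U i))"
proof -
  obtain s where s: "s \<in> {-1, 1}" and P: "oriented_polygon s (2 * n) P" and "2 \<le> n"
    using convP by (auto simp: convex_polygon_iff_oriented)
  have U: "U = difference_polygon n Z (1 / (2 * a)) P"
    by (simp add: U_def difference_polygon_def antipode_def fun_eq_iff)
  have antiparallel: "\<exists>L>0. edge (2 * n) P (antipode n i) = - L *\<^sub>R edge (2 * n) P i" if "i < 2 * n" for i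
    using antipodal_edges_antiparallel[OF P \<open>2 \<le> n\<close> parallel_antipodal_edges[OF parP that] that] .
  have convU: "convex_polygon (2 * n) U"
    using oriented_difference_polygon[OF P _ antiparallel] s \<open>2 \<le> n\<close> a_pos
    by (auto simp: U convex_polygon_iff_oriented)
  have symU: "symmetric_wrt (2 * n) U Z"
    using symmetric_wrt_difference_polygon \<open>2 \<le> n\<close> by (simp add: U)
  have edgesU: "\<forall>i<n. parallel (U (Suc i) - U i) (P (Suc i) - P i)"
    using difference_polygon_edges_parallel[OF antiparallel] by (simp add: U)
  have radiiU: "\<forall>i<n. parallel (U i - Z) (P i - P (i + n))"
    by (simp add: U difference_polygon_def antipode_eq_add parallel_scaleR_left)
  have reflected: "U (k + n) = 2 *\<^sub>R Z - U k" if "k < n" for k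
    using difference_polygon_antipode[of k n Z "1 / (2 * a)" P] that by (simp add: U antipode_eq_add)
  show ?thesis
    using convU symU edgesU radiiU
      convex_polygon_unique_by_directions[OF P \<open>2 \<le> n\<close> convU reflected edgesU radiiU]
    by blast
qed

end
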